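(* Let $k\ge 4$ and let $w$ be a minimal uncompletable word for $S_k$. Let $p$ and $q$ be two consecutive occurrences of $v=b^{k-1}a$ in $w$ ($p$ before $q$), with sets of forbidden local positions $F_p$ and $F_q$. If $F_q=\{0,i,i+1,\dots,k-2\}$ for some $1\le i\le k-2$, then $|F_p|<|F_q|$.
   Context: $\Sigma=\{a,b\}$. $S_k=\left(\Sigma^k\setminus\{ba^{k-1},b^{k-1}a\}\right)\cup\left(\Sigma^{k-1}\setminus\{a^{k-1},b^{k-1}\}\right)$, $u=ba^{k-1}$, $v=b^{k-1}a$. $\mathit{Fact}(S^* )$ and $\mathit{Pref}(S^* )$ are the sets of factors and of prefixes of words in $S^*$. A word $w\notin\mathit{Fact}(S_k^* )$ is uncompletable; a minimal uncompletable word is one of minimal length. For $w=w_1\cdots w_n$, $w[i..j]=w_i\cdots w_j$ (empty if $i>j$). A position $j$, $0\le j\le n-1$, is forbidden in $w$ if $w[j+1..n]\notin\mathit{Pref}(S_k^* )$. An occurrence of $p\in\{u,v\}$ in $w$ is an index $s$ with $w[s+1..s+k]=p$; local position $i\in\{0,\dots,k-1\}$ is the position $s+i$ of $w$, and it is forbidden in the occurrence if $s+i$ is forbidden in $w$. Two occurrences of words from $\{u,v\}$ starting at $s<t$ overlap if $t<s+k$; they are consecutive if either they overlap or they are the only occurrences of $u$ or $v$ lying inside the factor $w[s+1..t+k]$. *)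

theory Defs
  imports Main
begin

datatype letter = La | Lb

type_synonym word = "letter list"

definition u_word :: "nat \<Rightarrow> word" where
  "u_word k = Lb # replicate (k - 1) La"

definition v_word :: "nat \<Rightarrow> word" where
  "v_word k = replicate (k - 1) Lb @ [La]"

definition S :: "nat \<Rightarrow> word set" where
  "S k = ({w. length w = k} - {u_word k, v_word k})
         \<union> ({w. length w = k - 1} - {replicate (k - 1) La, replicate (k - 1) Lb})"

definition kstar :: "word set \<Rightarrow> word set" where
  "kstar L = {concat ws | ws. set ws \<subseteq> L}"

definition Fact :: "word set \<Rightarrow> word set" where
  "Fact L = {x. \<exists>y z. y @ x @ z \<in> L}"

definition Pref :: "word set \<Rightarrow> word set" where
  "Pref L = {x. \<exists>z. x @ z \<in> L}"

definition uncompletable :: "nat \<Rightarrow> word \<Rightarrow> bool" where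
  "uncompletable k w \<longleftrightarrow> w \<notin> Fact (kstar (S k))"

definition minimal_uncompletable :: "nat \<Rightarrow> word \<Rightarrow> bool" where
  "minimal_uncompletable k w \<longleftrightarrow> uncompletable k w \<and>
     (\<forall>w'. uncompletable k w' \<longrightarrow> length w \<le> length w')"

text \<open>Position j (0 \<le> j \<le> n-1) is forbidden in w if w[j+1..n] = drop j w is not in Pref(S_k^*).\<close>
definition forbidden :: "nat \<Rightarrow> word \<Rightarrow> nat \<Rightarrow> bool" where
  "forbidden k w j \<longleftrightarrow> j < length w \<and> drop j w \<notin> Pref (kstar (S k))"

text \<open>An occurrence of p at index s: w[s+1..s+k] = p.\<close>
definition occ :: "nat \<Rightarrow> word \<Rightarrow> word \<Rightarrow> nat \<Rightarrow> bool" where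
  "occ k w p s \<longleftrightarrow> s + k \<le> length w \<and> take k (drop s w) = p"

definition occ_uv :: "nat \<Rightarrow> word \<Rightarrow> nat \<Rightarrow> bool" where
  "occ_uv k w s \<longleftrightarrow> occ k w (u_word k) s \<or> occ k w (v_word k) s"

definition forb_local :: "nat \<Rightarrow> word \<Rightarrow> nat \<Rightarrow> nat set" where
  "forb_local k w s = {i. i < k \<and> forbidden k w (s + i)}"

definition consecutive :: "nat \<Rightarrow> word \<Rightarrow> nat \<Rightarrow> nat \<Rightarrow> bool" where
  "consecutive k w s t \<longleftrightarrow> occ_uv k w s \<and> occ_uv k w t \<and> s < t \<and>
     (t < s + k \<or> (\<forall>r. occ_uv k w r \<and> s \<le> r \<and> r + k \<le> t + k \<longrightarrow> r = s \<or> r = t))"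

end

theory Submission
  imports Defs
begin

(* Call a position p of w completable if w[p+1..] is a prefix of a word
   in the star of S_k; inside w this means "not forbidden".  Write t = s + q k + d with 0 <= d < k.
   Between the consecutive occurrences at s and t no u or v starts, so every factor
   of length k there lies in S_k and completability propagates backwards by steps
   of k.  Consequently local position r of t transfers to local position (d + r) mod k
   of s, both when r itself is completable and when r - 1 (cyclically) is, using the
   factors of length k - 1 inside the occurrence at s.  For F_t = {0} u {i..k-2} this
   yields i + 1 completable local positions of s, i.e. |F_s| < |F_t|, except in two
   degenerate residues when i = 1; those are excluded by minimality: cutting out the
   factor between two positions with the same next k - 1 letters, one dominating the
   other, would leave a shorter uncompletable word. *)

lemma kstar_append: "a \<in> kstar L \<Longrightarrow> b \<in> kstar L \<Longrightarrow> a @ b \<in> kstar L"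
proof -
  assume "a \<in> kstar L" "b \<in> kstar L"
  then obtain as bs where "a = concat as" "b = concat bs" "set as \<subseteq> L" "set bs \<subseteq> L"
    unfolding kstar_def by blast
  then have "a @ b = concat (as @ bs) \<and> set (as @ bs) \<subseteq> L" by simp
  then show ?thesis unfolding kstar_def by blast
qed

lemma kstar_singleton: "x \<in> L \<Longrightarrow> x \<in> kstar L"
  unfolding kstar_def by (auto intro!: exI[of _ "[x]"])

lemma S_length: "x \<in> S k \<Longrightarrow> length x = k \<or> length x = k - 1"
  unfolding S_def by auto

lemma S_long_iff:
  "k \<ge> 2 \<Longrightarrow> length x = k \<Longrightarrow> x \<in> S k \<longleftrightarrow> x \<noteq> u_word k \<and> x \<noteq> v_word k"
  unfolding S_def by auto

lemma S_short_iff: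
  "k \<ge> 2 \<Longrightarrow> length x = k - 1 \<Longrightarrow>
     x \<in> S k \<longleftrightarrow> x \<noteq> replicate (k - 1) La \<and> x \<noteq> replicate (k - 1) Lb"
  unfolding S_def by auto

lemma u_word_nth: "j < k \<Longrightarrow> u_word k ! j = (if j = 0 then Lb else La)"
  unfolding u_word_def by (cases j) auto

lemma v_word_nth: "j < k \<Longrightarrow> v_word k ! j = (if j < k - 1 then Lb else La)"
  unfolding v_word_def by (auto simp: nth_append)

lemma length_u_word: "k \<ge> 1 \<Longrightarrow> length (u_word k) = k"
  unfolding u_word_def by auto

lemma S_start_La: "k \<ge> 2 \<Longrightarrow> length x = k \<Longrightarrow> x ! 0 = La \<Longrightarrow> x \<in> S k"
  using u_word_nth[of 0 k] v_word_nth[of 0 k] by (auto simp: S_long_iff)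

lemma S_end_Lb: "k \<ge> 2 \<Longrightarrow> length x = k \<Longrightarrow> x ! (k - 1) = Lb \<Longrightarrow> x \<in> S k"
  using u_word_nth[of "k - 1" k] v_word_nth[of "k - 1" k] by (auto simp: S_long_iff)

text \<open>Every word shorter than k is a prefix of S_k^*: pad it with b's to length k.\<close>

lemma Pref_short:
  assumes "k \<ge> 2" "length x < k"
  shows "x \<in> Pref (kstar (S k))"
proof -
  let ?y = "x @ replicate (k - length x) Lb"
  have "length ?y = k" "?y ! (k - 1) = Lb"
    using assms by (auto simp: nth_append)
  then have "?y \<in> S k" using S_end_Lb assms(1) by blast
  then show ?thesis unfolding Pref_def by (blast intro: kstar_singleton)
qed

lemma Pref_rec:
  assumes "k \<ge> 2" "k \<le> length x"
  shows "x \<in> Pref (kstar (S k)) \<longleftrightarrow>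
     (take (k - 1) x \<in> S k \<and> drop (k - 1) x \<in> Pref (kstar (S k))) \<or>
     (take k x \<in> S k \<and> drop k x \<in> Pref (kstar (S k)))"
proof
  assume "x \<in> Pref (kstar (S k))"
  then obtain z ws where e: "x @ z = concat ws" and ws: "set ws \<subseteq> S k"
    unfolding Pref_def kstar_def by auto
  have "ws \<noteq> []" using e assms by auto
  then obtain y ws' where wsd: "ws = y # ws'" by (cases ws) auto
  have yS: "y \<in> S k" and ws': "set ws' \<subseteq> S k" using ws wsd by auto
  have ly: "length y = k \<or> length y = k - 1" using S_length[OF yS] .
  then have le: "length y \<le> length x" using assms by auto
  have e2: "x @ z = y @ concat ws'" using e wsd by simp
  have "take (length y) x = y"
    using arg_cong[OF e2, of "take (length y)"] le by simp
  moreover have "drop (length y) x @ z = concat ws'"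
    using arg_cong[OF e2, of "drop (length y)"] le by simp
  then have "drop (length y) x \<in> Pref (kstar (S k))"
    using ws' unfolding Pref_def kstar_def by auto
  ultimately have "take (length y) x \<in> S k \<and> drop (length y) x \<in> Pref (kstar (S k))"
    using yS by simp
  then show "(take (k - 1) x \<in> S k \<and> drop (k - 1) x \<in> Pref (kstar (S k))) \<or>
     (take k x \<in> S k \<and> drop k x \<in> Pref (kstar (S k)))"
    using ly by auto
next
  have split_Pref: "x \<in> Pref (kstar (S k))"
    if "take n x \<in> S k" "drop n x \<in> Pref (kstar (S k))" for n
  proof -
    from that obtain z where "drop n x @ z \<in> kstar (S k)" unfolding Pref_def by auto
    then have "take n x @ drop n x @ z \<in> kstar (S k)"
      using kstar_append[OF kstar_singleton[OF that(1)]] by blast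
    then have "x @ z \<in> kstar (S k)" by (metis append_assoc append_take_drop_id)
    then show ?thesis unfolding Pref_def by blast
  qed
  assume "(take (k - 1) x \<in> S k \<and> drop (k - 1) x \<in> Pref (kstar (S k))) \<or>
     (take k x \<in> S k \<and> drop k x \<in> Pref (kstar (S k)))"
  then show "x \<in> Pref (kstar (S k))" using split_Pref by blast
qed

lemma concat_split_suffix:
  assumes "k > 0" "concat ws = a @ b" "\<forall>y\<in>set ws. length y \<le> k"
  shows "\<exists>c n. b = c @ concat (drop n ws) \<and> length c < k"
  using assms(2,3)
proof (induction ws arbitrary: a)
  case Nil
  then show ?case using assms(1) by (intro exI[of _ "[]"]) simp
next
  case (Cons y ws)
  show ?case
  proof (cases "length y \<le> length a")
    case True
    then have "concat ws = drop (length y) a @ b"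
      using Cons.prems(1) by (auto simp: append_eq_append_conv_if)
    moreover have "\<forall>y\<in>set ws. length y \<le> k" using Cons.prems(2) by simp
    ultimately obtain c n where "b = c @ concat (drop n ws)" "length c < k"
      using Cons.IH by blast
    then show ?thesis by (intro exI[of _ c] exI[of _ "Suc n"]) simp
  next
    case False
    then have b: "b = drop (length a) y @ concat ws"
      using Cons.prems(1) by (auto simp: append_eq_append_conv_if)
    show ?thesis
    proof (cases "a = []")
      case True
      then show ?thesis using Cons.prems(1) assms(1) by (intro exI[of _ "[]"] exI[of _ 0]) simp
    next
      case False
      have "length y \<le> k" "length a > 0" using Cons.prems(2) False by simp_all
      then have "length (drop (length a) y) < k" unfolding length_drop using assms(1) by linarith
      then show ?thesis using b by (intro exI[of _ "drop (length a) y"] exI[of _ 1]) simp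
    qed
  qed
qed

lemma Fact_iff_Pref_suffix:
  assumes k2: "k \<ge> 2"
  shows "x \<in> Fact (kstar (S k)) \<longleftrightarrow>
    (\<exists>j \<le> k - 1. j \<le> length x \<and> drop j x \<in> Pref (kstar (S k)))"
proof
  assume "x \<in> Fact (kstar (S k))"
  then obtain y z ws where e: "y @ x @ z = concat ws" and ws: "set ws \<subseteq> S k"
    unfolding Fact_def kstar_def by blast
  have "\<forall>v\<in>set ws. length v \<le> k" using ws S_length by fastforce
  then obtain c n where c: "x @ z = c @ concat (drop n ws)" "length c < k"
    using concat_split_suffix[of k ws y "x @ z"] e k2 by auto
  show "\<exists>j \<le> k - 1. j \<le> length x \<and> drop j x \<in> Pref (kstar (S k))"
  proof (cases "length c \<le> length x")
    case True
    have "drop (length c) x @ z = concat (drop n ws)"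
      using arg_cong[OF c(1), of "drop (length c)"] True by simp
    moreover have "set (drop n ws) \<subseteq> S k" using order_trans[OF set_drop_subset ws] .
    ultimately have "drop (length c) x \<in> Pref (kstar (S k))"
      unfolding Pref_def kstar_def by blast
    then show ?thesis using True c(2) by (intro exI[of _ "length c"]) simp
  next
    case False
    then show ?thesis using Pref_short[OF k2, of "[]"] c(2)
      by (intro exI[of _ "length x"]) simp
  qed
next
  assume "\<exists>j \<le> k - 1. j \<le> length x \<and> drop j x \<in> Pref (kstar (S k))"
  then obtain j z where j: "j \<le> k - 1" "j \<le> length x" and z: "drop j x @ z \<in> kstar (S k)"
    unfolding Pref_def by blast
  let ?y = "replicate (k - j) La @ take j x"
  have "length ?y = k" "?y ! 0 = La" using j k2 by (auto simp: nth_append)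
  then have "?y \<in> S k" using S_start_La k2 by blast
  then have "?y @ drop j x @ z \<in> kstar (S k)" using kstar_append[OF kstar_singleton z] by blast
  then have "replicate (k - j) La @ x @ z \<in> kstar (S k)"
    by (metis append_assoc append_take_drop_id)
  then show "x \<in> Fact (kstar (S k))" unfolding Fact_def by blast
qed

definition completable :: "nat \<Rightarrow> word \<Rightarrow> nat \<Rightarrow> bool" where
  "completable k w p \<longleftrightarrow> drop p w \<in> Pref (kstar (S k))"

lemma forbidden_iff: "p < length w \<Longrightarrow> forbidden k w p \<longleftrightarrow> \<not> completable k w p"
  unfolding forbidden_def completable_def by simp

lemma completable_rec:
  assumes "k \<ge> 2" "p + k \<le> length w"
  shows "completable k w p \<longleftrightarrow>
     (take (k - 1) (drop p w) \<in> S k \<and> completable k w (p + k - 1)) \<or>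
     (take k (drop p w) \<in> S k \<and> completable k w (p + k))"
proof -
  have "drop (k - 1) (drop p w) = drop (p + k - 1) w" "drop k (drop p w) = drop (p + k) w"
    using assms(1) by (simp_all add: add.commute)
  then show ?thesis unfolding completable_def using Pref_rec[OF assms(1)] assms(2) by simp
qed

lemma uncompletable_iff:
  "k \<ge> 2 \<Longrightarrow> uncompletable k w \<longleftrightarrow> (\<forall>j \<le> k - 1. j \<le> length w \<longrightarrow> \<not> completable k w j)"
  unfolding uncompletable_def completable_def using Fact_iff_Pref_suffix by blast


section \<open>Cutting out a factor between two positions with the same context\<close>

definition cut_out :: "nat \<Rightarrow> nat \<Rightarrow> word \<Rightarrow> word" where
  "cut_out x y w = take x w @ drop y w"

lemma length_cut_out: "x \<le> y \<Longrightarrow> y \<le> length w \<Longrightarrow> length (cut_out x y w) = x + (length w - y)"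
  unfolding cut_out_def by simp

lemma completable_cut_out_after:
  assumes "x \<le> p" "x \<le> y" "y \<le> length w"
  shows "completable k (cut_out x y w) p \<longleftrightarrow> completable k w (p - x + y)"
proof -
  have "drop p (cut_out x y w) = drop (p - x) (drop y w)"
    unfolding cut_out_def using assms by simp
  then show ?thesis unfolding completable_def by (simp add: add.commute)
qed

lemma take_append_tail_eq:
  assumes "take (k - 1) B = take (k - 1) C" "m \<le> k" "A \<noteq> []"
  shows "take m (A @ B) = take m (A @ C)"
proof -
  have "m - length A \<le> k - 1" using assms(2,3) by (cases A) auto
  then have "take (m - length A) B = take (m - length A) C"
    using arg_cong[OF assms(1), of "take (m - length A)"] by (simp add: min_absorb1)
  then show ?thesis by simp
qed

lemma completable_cut_out_before:
  assumes k2: "k \<ge> 2" and xy: "x < y" and yk: "y + k \<le> length w"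
    and same: "take (k - 1) (drop x w) = take (k - 1) (drop y w)"
    and dom: "\<forall>j<k. completable k w (y + j) \<longrightarrow> completable k w (x + j)"
  shows "p < x \<Longrightarrow> completable k (cut_out x y w) p \<Longrightarrow> completable k w p"
proof (induction "x - p" arbitrary: p rule: less_induct)
  case less
  let ?w' = "cut_out x y w" and ?A = "take (x - p) (drop p w)"
  have pk': "p + k \<le> length ?w'" using length_cut_out[of x y w] less.prems xy yk by simp
  have pk: "p + k \<le> length w" using less.prems xy yk by simp
  have d': "drop p ?w' = ?A @ drop y w"
    unfolding cut_out_def using less.prems xy yk by (simp add: drop_take)
  have d: "drop p w = ?A @ drop x w"
    using less.prems by (metis append_take_drop_id drop_drop le_add_diff_inverse2 less_imp_le_nat)
  have A_ne: "?A \<noteq> []" using less.prems xy yk by simp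
  have same_block: "take m (drop p ?w') = take m (drop p w)" if "m \<le> k" for m
    using take_append_tail_eq[OF same[symmetric] that A_ne] by (simp only: d' flip: d)
  have next_pos: "completable k ?w' q \<Longrightarrow> completable k w q" if "p + k - 1 \<le> q" "q \<le> p + k" for q
  proof (cases "q < x")
    case True
    then show "completable k ?w' q \<Longrightarrow> completable k w q"
      using less.hyps[of q] that k2 by simp
  next
    case False
    then have "q - x < k" using that less.prems k2 by simp
    then have "completable k w (y + (q - x)) \<longrightarrow> completable k w q"
      using dom False by (metis le_add_diff_inverse not_less)
    then show "completable k ?w' q \<Longrightarrow> completable k w q"
      using completable_cut_out_after[of x q y w k] False xy yk by (simp add: add.commute)
  qed
  from less.prems(2) have "(take (k - 1) (drop p ?w') \<in> S k \<and> completable k ?w' (p + k - 1)) \<or>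
      (take k (drop p ?w') \<in> S k \<and> completable k ?w' (p + k))"
    using completable_rec[OF k2 pk'] by simp
  then have "(take (k - 1) (drop p w) \<in> S k \<and> completable k w (p + k - 1)) \<or>
      (take k (drop p w) \<in> S k \<and> completable k w (p + k))"
    using same_block[of "k - 1"] same_block[of k] next_pos[of "p + k - 1"] next_pos[of "p + k"]
    by auto
  then show "completable k w p" using completable_rec[OF k2 pk] by simp
qed

lemma uncompletable_cut_out:
  assumes k2: "k \<ge> 2" and xy: "x < y" and yk: "y + k \<le> length w"
    and same: "take (k - 1) (drop x w) = take (k - 1) (drop y w)"
    and dom: "\<forall>j<k. completable k w (y + j) \<longrightarrow> completable k w (x + j)"
    and unc: "uncompletable k w"
  shows "uncompletable k (cut_out x y w)"
  unfolding uncompletable_iff[OF k2]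
proof (intro allI impI)
  fix j assume j: "j \<le> k - 1" "j \<le> length (cut_out x y w)"
  have not_j: "\<not> completable k w j" using unc j yk unfolding uncompletable_iff[OF k2] by simp
  show "\<not> completable k (cut_out x y w) j"
  proof (cases "j < x")
    case True
    then show ?thesis using completable_cut_out_before[OF assms(1-5)] not_j by blast
  next
    case False
    then have "j - x < k" using j k2 by simp
    then have "completable k w (y + (j - x)) \<longrightarrow> completable k w j"
      using dom False by (metis le_add_diff_inverse not_less)
    then show ?thesis
      using completable_cut_out_after[of x j y w k] False xy yk not_j by (simp add: add.commute)
  qed
qed

lemma minimal_no_dominated_pair:
  assumes "minimal_uncompletable k w" "k \<ge> 2" "x < y" "y + k \<le> length w"
    and "take (k - 1) (drop x w) = take (k - 1) (drop y w)"
    and "\<forall>j<k. completable k w (y + j) \<longrightarrow> completable k w (x + j)"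
  shows False
proof -
  have "uncompletable k (cut_out x y w)"
    using uncompletable_cut_out assms minimal_uncompletable_def by blast
  then have "length w \<le> length (cut_out x y w)"
    using assms(1) unfolding minimal_uncompletable_def by blast
  then show False using length_cut_out[of x y w] assms(3,4) by simp
qed


section \<open>Propagating completable positions to a block of b's\<close>

definition good_window :: "nat \<Rightarrow> word \<Rightarrow> nat \<Rightarrow> bool" where
  "good_window k w x \<longleftrightarrow>
     (\<exists>j1 j2. j1 < j2 \<and> j2 < k \<and> completable k w (x + j1) \<and> completable k w (x + j2)) \<or>
     (\<exists>j l. 1 \<le> j \<and> j \<le> k - 2 \<and> l < j \<and> completable k w (x + j) \<and> w ! (x + l) = Lb)"

definition b_anchor :: "nat \<Rightarrow> word \<Rightarrow> nat \<Rightarrow> bool" where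
  "b_anchor k w x \<longleftrightarrow> take (k - 1) (drop x w) = replicate (k - 1) Lb \<and>
     (completable k w (x + 1) \<or> completable k w (x + k - 1))"

text \<open>If x is not completable but x + k is, the factor of length k at x is u or v,
  so it starts with b.\<close>

lemma blocked_long_step_Lb:
  assumes k2: "k \<ge> 2" and xk: "x + k \<le> length w"
    and "\<not> completable k w x" "completable k w (x + k)"
  shows "w ! x = Lb"
proof -
  have "take k (drop x w) \<notin> S k" using assms completable_rec[OF k2 xk] by blast
  moreover have "length (take k (drop x w)) = k" using xk by simp
  ultimately have "take k (drop x w) = u_word k \<or> take k (drop x w) = v_word k"
    using S_long_iff[OF k2] by blast
  moreover have "u_word k ! 0 = Lb" "v_word k ! 0 = Lb"
    using u_word_nth[of 0 k] v_word_nth[of 0 k] k2 by auto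
  ultimately have "take k (drop x w) ! 0 = Lb" by metis
  then show ?thesis using xk k2 by simp
qed

text \<open>If x is not completable but x + k - 1 is, the factor of length k - 1 at x is
  a^(k-1) or b^(k-1); if it contains a b, we have found a b-anchor.\<close>

lemma blocked_short_step_anchor:
  assumes k2: "k \<ge> 2" and xk: "x + k \<le> length w"
    and nx: "\<not> completable k w x" and c: "completable k w (x + k - 1)"
    and l: "l < k - 1" "w ! (x + l) = Lb"
  shows "b_anchor k w x"
proof -
  let ?B = "take (k - 1) (drop x w)"
  have "?B \<notin> S k" using nx c completable_rec[OF k2 xk] by blast
  moreover have "length ?B = k - 1" using xk by simp
  ultimately have "?B = replicate (k - 1) La \<or> ?B = replicate (k - 1) Lb"
    using S_short_iff[OF k2] by blast
  moreover have "?B \<noteq> replicate (k - 1) La"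
  proof
    assume "?B = replicate (k - 1) La"
    then have "?B ! l = La" using l(1) by simp
    then show False using l xk by simp
  qed
  ultimately have "?B = replicate (k - 1) Lb" by blast
  then show ?thesis unfolding b_anchor_def using c by simp
qed

lemma good_window_step_two:
  assumes k2: "k \<ge> 2" and xk: "x + k \<le> length w"
    and j: "j1 < j2" "j2 < k" "completable k w (Suc x + j1)" "completable k w (Suc x + j2)"
  shows "good_window k w x \<or> b_anchor k w x"
proof (cases "Suc j2 < k")
  case True
  then show ?thesis unfolding good_window_def using j
    by (intro disjI1 exI[of _ "Suc j1"] exI[of _ "Suc j2"]) simp
next
  case False
  then have "Suc x + j2 = x + k" using j(2) by simp
  then have c_end: "completable k w (x + k)" using j(4) by metis
  show ?thesis
  proof (cases "completable k w x")
    case True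
    then show ?thesis unfolding good_window_def using j
      by (intro disjI1 disjI1 exI[of _ 0] exI[of _ "Suc j1"]) simp
  next
    case nx: False
    have wx: "w ! x = Lb" using blocked_long_step_Lb[OF k2 xk nx c_end] .
    show ?thesis
    proof (cases "Suc j1 \<le> k - 2")
      case True
      then show ?thesis unfolding good_window_def using j wx
        by (intro disjI1 disjI2 exI[of _ "Suc j1"] exI[of _ 0]) simp
    next
      case False
      then have "x + k - 1 = Suc x + j1" using j(1,2) by simp
      then have "completable k w (x + k - 1)" using j(3) by simp
      then show ?thesis using blocked_short_step_anchor[OF k2 xk nx _, of 0] wx k2 by simp
    qed
  qed
qed

lemma good_window_step_after_b:
  assumes k2: "k \<ge> 2" and xk: "x + k \<le> length w"
    and j: "1 \<le> j" "j \<le> k - 2" "l < j" "completable k w (Suc x + j)" "w ! (Suc x + l) = Lb"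
  shows "good_window k w x \<or> b_anchor k w x"
proof (cases "Suc j \<le> k - 2")
  case True
  then show ?thesis unfolding good_window_def using j
    by (intro disjI1 disjI2 exI[of _ "Suc j"] exI[of _ "Suc l"]) simp
next
  case False
  then have "x + k - 1 = Suc x + j" using j(2) k2 by simp
  then have c: "completable k w (x + k - 1)" using j(4) by simp
  show ?thesis
  proof (cases "completable k w x")
    case True
    then show ?thesis unfolding good_window_def using c k2
      by (intro disjI1 disjI1 exI[of _ 0] exI[of _ "k - 1"]) simp
  next
    case False
    have "Suc l < k - 1" "w ! (x + Suc l) = Lb" using j by simp_all
    then show ?thesis using blocked_short_step_anchor[OF k2 xk False c] by simp
  qed
qed

lemma good_window_step:
  assumes "k \<ge> 2" "x + k \<le> length w" "good_window k w (Suc x)"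
  shows "good_window k w x \<or> b_anchor k w x"
  using assms(3) good_window_step_two[OF assms(1,2)] good_window_step_after_b[OF assms(1,2)]
  unfolding good_window_def[of k w "Suc x"] by blast

text \<open>In an uncompletable word the window at 0 is not good; hence every good window
  is preceded by a b-anchor.\<close>

lemma good_window_anchor:
  assumes k2: "k \<ge> 2" and unc: "uncompletable k w"
  shows "m + k \<le> length w \<Longrightarrow> good_window k w m \<Longrightarrow> \<exists>y<m. b_anchor k w y"
proof (induction m)
  case 0
  have no: "\<not> completable k w j" if "j \<le> k - 1" for j
    using unc that 0 unfolding uncompletable_iff[OF k2] by simp
  from 0(2) have False unfolding good_window_def
  proof (elim disjE exE conjE)
    fix j1 j2 assume "j1 < j2" "j2 < k" "completable k w (0 + j1)"
    then show False using no[of j1] by simp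
  next
    fix j l assume "j \<le> k - 2" "completable k w (0 + j)"
    then show False using no[of j] by simp
  qed
  then show ?case ..
next
  case (Suc m)
  then have mk: "m + k \<le> length w" by simp
  have "good_window k w m \<or> b_anchor k w m" using good_window_step[OF k2 mk] Suc.prems(2) by simp
  then show ?case
  proof
    assume "good_window k w m"
    then obtain y where "y < m" "b_anchor k w y" using Suc.IH mk by blast
    then show ?case using less_SucI by blast
  next
    assume "b_anchor k w m"
    then show ?case by blast
  qed
qed


lemma occ_v_nth:
  assumes "occ k w (v_word k) p" "j < k"
  shows "w ! (p + j) = (if j < k - 1 then Lb else La)"
proof -
  have "p + k \<le> length w" "take k (drop p w) = v_word k" using assms(1) unfolding occ_def by auto
  then have "w ! (p + j) = v_word k ! j" using assms(2) by (metis nth_drop nth_take add_leD1 le_add_diff_inverse2)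
  then show ?thesis using v_word_nth[OF assms(2)] by simp
qed

lemma occ_v_block:
  assumes "occ k w (v_word k) p"
  shows "take (k - 1) (drop p w) = replicate (k - 1) Lb"
proof -
  have len: "p + k \<le> length w" using assms unfolding occ_def by simp
  show ?thesis
  proof (rule nth_equalityI)
    show "length (take (k - 1) (drop p w)) = length (replicate (k - 1) Lb)" using len by simp
    fix j assume "j < length (take (k - 1) (drop p w))"
    then show "take (k - 1) (drop p w) ! j = replicate (k - 1) Lb ! j"
      using occ_v_nth[OF assms, of j] len by simp
  qed
qed

text \<open>Two occurrences of v = b^(k-1)a cannot overlap: the final a of the first would
  fall on a b of the second.\<close>

lemma occ_v_apart:
  assumes "k \<ge> 1" "occ k w (v_word k) s" "occ k w (v_word k) t" "s < t"
  shows "s + k \<le> t"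
proof (rule ccontr)
  let ?j = "s + k - 1 - t"
  assume "\<not> s + k \<le> t"
  then have j: "?j < k - 1" and eq: "t + ?j = s + (k - 1)" using assms(1,4) by simp_all
  have "w ! (t + ?j) = Lb" using occ_v_nth[OF assms(3), of ?j] j by simp
  moreover have "w ! (s + (k - 1)) = La" using occ_v_nth[OF assms(2), of "k - 1"] assms(1) by simp
  ultimately show False using eq by simp
qed

definition completable_local :: "nat \<Rightarrow> word \<Rightarrow> nat \<Rightarrow> nat set" where
  "completable_local k w p = {j. j < k \<and> completable k w (p + j)}"

lemma card_forb_local:
  assumes "p + k \<le> length w"
  shows "card (forb_local k w p) = k - card (completable_local k w p)"
proof -
  have "forb_local k w p = {..<k} - completable_local k w p"
    unfolding forb_local_def completable_local_def using forbidden_iff assms by fastforce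
  moreover have "completable_local k w p \<subseteq> {..<k}" unfolding completable_local_def by auto
  ultimately show ?thesis by (simp add: card_Diff_subset finite_subset)
qed

lemma mod_eq_imp_le:
  fixes y z k :: nat
  assumes "y mod k = z mod k" "y < z + k"
  shows "y \<le> z"
proof (rule ccontr)
  assume "\<not> y \<le> z"
  then obtain m where "y = z + k * m" using mod_eq_nat1E[OF assms(1)] by fastforce
  moreover have "m \<noteq> 0" using \<open>\<not> y \<le> z\<close> calculation by auto
  then have "k \<le> k * m" by simp
  ultimately show False using assms(2) by linarith
qed

lemma mod_add_left_inj:
  fixes d x y k :: nat
  assumes "x < k" "y < k" "(d + x) mod k = (d + y) mod k"
  shows "x = y"
proof (rule ccontr)
  assume "x \<noteq> y"
  then obtain a b where ab: "a < b" "b < k" "(d + b) mod k = (d + a) mod k"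
    using assms by (metis linorder_neqE_nat)
  then have "k dvd (d + b) - (d + a)" by (simp add: mod_eq_dvd_iff_nat)
  then have "k dvd b - a" by simp
  then show False using ab by (metis dvd_imp_le zero_less_diff less_imp_diff_less diff_le_self not_less)
qed

section \<open>Two consecutive occurrences of v in a minimal uncompletable word\<close>

locale consecutive_v_pair =
  fixes k :: nat and w :: word and s t :: nat
  assumes k4: "k \<ge> 4"
    and minimal: "minimal_uncompletable k w"
    and occ_s: "occ k w (v_word k) s"
    and occ_t: "occ k w (v_word k) t"
    and consec: "consecutive k w s t"
begin

lemma k2: "k \<ge> 2"
  using k4 by simp

lemma uncompletable: "uncompletable k w"
  using minimal unfolding minimal_uncompletable_def by simp

lemma t_end: "t + k \<le> length w"
  using occ_t unfolding occ_def by simp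

lemma gap: "s + k \<le> t"
  using occ_v_apart[OF _ occ_s occ_t] consec k4 unfolding consecutive_def by simp

text \<open>No occurrence of u or v starts strictly between s and t, so every factor of
  length k starting there belongs to S_k.\<close>

lemma block_between_in_S:
  assumes "s < y" "y < t"
  shows "take k (drop y w) \<in> S k"
proof -
  have yk: "y + k \<le> length w" using assms t_end by simp
  have "\<not> occ_uv k w y" using consec gap assms unfolding consecutive_def by fastforce
  then have "take k (drop y w) \<noteq> u_word k" "take k (drop y w) \<noteq> v_word k"
    using yk unfolding occ_uv_def occ_def by auto
  then show ?thesis using S_long_iff[OF k2] yk by simp
qed

lemma completable_back_steps:
  "s < y \<Longrightarrow> y + m * k < t + k \<Longrightarrow> completable k w (y + m * k) \<Longrightarrow> completable k w y"
proof (induction m arbitrary: y)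
  case 0
  then show ?case by simp
next
  case (Suc m)
  have "completable k w (y + k)"
    using Suc.IH[of "y + k"] Suc.prems by (simp add: algebra_simps)
  moreover have "y + k \<le> length w" "y < t" using Suc.prems(2) t_end by simp_all
  ultimately show ?case
    using completable_rec[OF k2] block_between_in_S[OF Suc.prems(1)] by blast
qed

lemma completable_back:
  assumes "s < y" "y \<le> z" "z < t + k" "y mod k = z mod k" "completable k w z"
  shows "completable k w y"
proof -
  obtain m where "z = y + k * m" using mod_eq_nat2E[OF assms(4,2)] .
  then show ?thesis using completable_back_steps[of y m] assms by (simp add: mult.commute)
qed

text \<open>The factors of length k - 1 starting at the local positions 1, ..., k - 1 of the
  occurrence of v at s all belong to S_k: the first k - 2 of them contain both letters;
  the last one starts with a, and it cannot be a^(k-1), since then u = b a^(k-1) would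
  start at s + k - 2, inside the gap.\<close>

lemma short_block_in_S:
  assumes j: "1 \<le> j" "j \<le> k - 1"
  shows "take (k - 1) (drop (s + j) w) \<in> S k"
proof -
  let ?B = "take (k - 1) (drop (s + j) w)"
  have len: "s + j + (k - 1) \<le> length w" using j gap t_end by simp
  have B_nth: "?B ! m = w ! (s + (j + m))" if "m < k - 1" for m
    using that len by (simp add: add.assoc)
  have B_len: "length ?B = k - 1" using len by simp
  show ?thesis
  proof (cases "j \<le> k - 2")
    case True
    have "?B ! 0 = Lb" "?B ! (k - 1 - j) = La"
      using B_nth[of 0] B_nth[of "k - 1 - j"] occ_v_nth[OF occ_s, of j]
        occ_v_nth[OF occ_s, of "k - 1"] True j k4 by simp_all
    moreover have "0 < k - 1" "k - 1 - j < k - 1" using j k4 by simp_all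
    ultimately have "?B \<noteq> replicate (k - 1) La" "?B \<noteq> replicate (k - 1) Lb"
      by (metis letter.distinct(1) nth_replicate)+
    then show ?thesis using S_short_iff[OF k2 B_len] by simp
  next
    case False
    then have jk: "j = k - 1" using j by simp
    have "?B ! 0 = La" using B_nth[of 0] occ_v_nth[OF occ_s, of "k - 1"] jk k4 by simp
    moreover have "replicate (k - 1) Lb ! 0 = Lb" using k4 by simp
    ultimately have not_b: "?B \<noteq> replicate (k - 1) Lb" by force
    have not_a: "?B \<noteq> replicate (k - 1) La"
    proof
      assume A: "?B = replicate (k - 1) La"
      let ?y = "s + (k - 2)"
      have y_lt: "?y < length w" using gap t_end k4 by simp
      have "Suc ?y = s + j" using jk k4 by simp
      then have "drop ?y w = w ! ?y # drop (s + j) w" using Cons_nth_drop_Suc[OF y_lt] by metis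
      moreover have "w ! ?y = Lb" using occ_v_nth[OF occ_s, of "k - 2"] k4 by simp
      ultimately have "take k (drop ?y w) = Lb # replicate (k - 1) La"
        using A k4 by (cases k) auto
      then have "take k (drop ?y w) = u_word k" unfolding u_word_def by simp
      moreover have "take k (drop ?y w) \<in> S k" using block_between_in_S gap k4 by simp
      ultimately show False using S_long_iff[OF k2] length_u_word k4 by simp
    qed
    show ?thesis using S_short_iff[OF k2 B_len] not_a not_b by simp
  qed
qed

text \<open>Local position r of the occurrence at t lies in the same residue class modulo k
  as local position offset r of the occurrence at s.\<close>

definition offset :: "nat \<Rightarrow> nat" where
  "offset r = (t - s + r) mod k"

lemma offset_lt: "offset r < k"
  unfolding offset_def using k2 by simp

lemma offset_inj: "inj_on offset {..<k}"
  unfolding inj_on_def offset_def using mod_add_left_inj by blast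

lemma offset_eq: "offset r = (offset 0 + r) mod k"
  unfolding offset_def by (simp add: mod_add_left_eq)

lemma offset_last_zero: "offset (k - 1) = 0 \<Longrightarrow> offset 0 = 1"
proof -
  assume zero: "offset (k - 1) = 0"
  show "offset 0 = 1"
  proof (cases "offset 0")
    case 0
    then show ?thesis using zero offset_eq[of "k - 1"] k2 by simp
  next
    case (Suc e)
    then have "offset 0 + (k - 1) = e + k" using k2 by simp
    then show ?thesis using zero offset_eq[of "k - 1"] Suc offset_lt[of 0] by simp
  qed
qed

lemma transfer_same:
  assumes "r < k" "offset r \<noteq> 0" "completable k w (t + r)"
  shows "completable k w (s + offset r)"
proof (rule completable_back[OF _ _ _ _ assms(3)])
  show "s < s + offset r" using assms(2) by simp
  show "s + offset r \<le> t + r" using offset_lt[of r] gap by simp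
  show "t + r < t + k" using assms(1) by simp
  have "s \<le> t" using gap by simp
  then show "(s + offset r) mod k = (t + r) mod k"
    unfolding offset_def by (simp add: mod_add_right_eq)
qed

lemma transfer_previous:
  assumes "r < k" "offset r \<noteq> 0" "completable k w (t + (r + k - 1) mod k)"
  shows "completable k w (s + offset r)"
proof -
  let ?y = "s + offset r + (k - 1)" and ?z = "t + (r + k - 1) mod k"
  have s_t: "s \<le> t" using gap by simp
  have congr: "?y mod k = ?z mod k"
  proof -
    have "?y mod k = (s + (t - s + r) + (k - 1)) mod k"
      unfolding offset_def by (metis mod_add_left_eq mod_add_right_eq)
    also have "\<dots> = (t + (r + (k - 1))) mod k" using s_t by (simp add: add.assoc)
    also have "\<dots> = ?z mod k" using k2 by (simp add: mod_add_right_eq)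
    finally show ?thesis .
  qed
  have "?y < ?z + k" using offset_lt[of r] gap by simp
  then have "?y \<le> ?z" using mod_eq_imp_le[OF congr] by simp
  then have "completable k w ?y"
    using completable_back[OF _ _ _ congr assms(3)] k2 by simp
  moreover have "take (k - 1) (drop (s + offset r) w) \<in> S k"
    using short_block_in_S[of "offset r"] assms(2) offset_lt[of r] by simp
  moreover have "s + offset r + k \<le> length w" using offset_lt[of r] gap t_end by simp
  moreover have "s + offset r + k - 1 = ?y" using k2 by simp
  ultimately show ?thesis using completable_rec[OF k2] by metis
qed

lemma card_transfer:
  assumes R: "R \<subseteq> {..<k}" "\<forall>r\<in>R. completable k w (t + r) \<or> completable k w (t + (r + k - 1) mod k)"
  shows "card R \<le> card (completable_local k w s) + (if 0 \<in> offset ` R then 1 else 0)"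
proof -
  have "offset ` R - {0} \<subseteq> completable_local k w s"
  proof
    fix x assume "x \<in> offset ` R - {0}"
    then obtain r where r: "r \<in> R" "r < k" "x = offset r" "offset r \<noteq> 0" using R(1) by auto
    then have "completable k w (s + offset r)"
      using R(2) transfer_same[OF r(2,4)] transfer_previous[OF r(2,4)] by blast
    then show "x \<in> completable_local k w s"
      unfolding completable_local_def using r(3) offset_lt by simp
  qed
  then have "card (offset ` R - {0}) \<le> card (completable_local k w s)"
    by (rule card_mono[rotated]) (simp add: completable_local_def)
  moreover have "card (offset ` R) = card R"
    using card_image inj_on_subset[OF offset_inj R(1)] by blast
  moreover have "finite (offset ` R)" using R(1) finite_subset by blast
  ultimately show ?thesis by (auto simp: card_Diff_singleton_if)
qed


text \<open>If position t itself is forbidden, t and s are not congruent modulo k: otherwise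
  offset is the identity and every completable local position of t would be one of s,
  so cutting out w[s+1..t] would give a shorter uncompletable word.\<close>

lemma offset_zero_impossible:
  assumes "\<not> completable k w t"
  shows "offset 0 \<noteq> 0"
proof
  assume zero: "offset 0 = 0"
  have dom: "\<forall>j<k. completable k w (t + j) \<longrightarrow> completable k w (s + j)"
  proof (intro allI impI)
    fix j assume j: "j < k" "completable k w (t + j)"
    then have "j \<noteq> 0" using assms by (cases j) auto
    moreover have "offset j = j" using offset_eq[of j] zero j(1) by simp
    ultimately show "completable k w (s + j)" using transfer_same[OF j(1)] j(2) by simp
  qed
  have "s < t" using gap k2 by simp
  moreover have "take (k - 1) (drop s w) = take (k - 1) (drop t w)"
    using occ_v_block[OF occ_s] occ_v_block[OF occ_t] by simp
  ultimately show False using minimal_no_dominated_pair[OF minimal k2 _ t_end _ dom] by blast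
qed

text \<open>A b-anchor before s cannot coexist with s having the single completable local
  position 1 while t has only k - 1: depending on which position of the anchor is
  completable, it would dominate the occurrence at s or the one at t.\<close>

lemma no_anchor_before_s:
  assumes only_last: "\<forall>r<k. completable k w (t + r) \<longleftrightarrow> r = k - 1"
    and C: "completable_local k w s = {1}"
    and y: "y < s" "b_anchor k w y"
  shows False
proof -
  have s_end: "s + k \<le> length w" using gap t_end by simp
  have block_y: "take (k - 1) (drop y w) = replicate (k - 1) Lb"
    using y(2) unfolding b_anchor_def by simp
  from y(2) have "completable k w (y + 1) \<or> completable k w (y + k - 1)"
    unfolding b_anchor_def by simp
  then show False
  proof
    assume y1: "completable k w (y + 1)"
    have "\<forall>j<k. completable k w (s + j) \<longrightarrow> completable k w (y + j)"
    proof (intro allI impI)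
      fix j assume "j < k" "completable k w (s + j)"
      then have "j \<in> completable_local k w s" unfolding completable_local_def by simp
      then show "completable k w (y + j)" using C y1 by simp
    qed
    then show False using minimal_no_dominated_pair[OF minimal k2 y(1) s_end]
      block_y occ_v_block[OF occ_s] by simp
  next
    assume y_last: "completable k w (y + k - 1)"
    have "\<forall>j<k. completable k w (t + j) \<longrightarrow> completable k w (y + j)"
    proof (intro allI impI)
      fix j assume "j < k" "completable k w (t + j)"
      then have "j = k - 1" using only_last by simp
      then show "completable k w (y + j)" using y_last k2 by simp
    qed
    moreover have "y < t" using y(1) gap by simp
    ultimately show False using minimal_no_dominated_pair[OF minimal k2 _ t_end]
      block_y occ_v_block[OF occ_t] by simp
  qed
qed

text \<open>The case t - s = 1 (mod k) when only the last local position of t is completable: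
  then s + 1 is completable, so the window at s is good; if 1 were the only
  completable local position of s, the b-anchor preceding it would be impossible.\<close>

lemma only_last_offset_one:
  assumes only_last: "\<forall>r<k. completable k w (t + r) \<longleftrightarrow> r = k - 1"
    and one: "offset 0 = 1"
  shows "2 \<le> card (completable_local k w s)"
proof (rule ccontr)
  let ?C = "completable_local k w s"
  assume few: "\<not> 2 \<le> card ?C"
  have "completable k w (t + (k - 1))" using only_last[rule_format, of "k - 1"] k2 by simp
  moreover have "(0 + k - 1) mod k = k - 1" using k2 by simp
  ultimately have "completable k w (t + (0 + k - 1) mod k)" by simp
  then have s1: "completable k w (s + 1)"
    using transfer_previous[of 0] one k2 by simp
  then have "1 \<in> ?C" unfolding completable_local_def using k2 by simp
  moreover have "finite ?C" unfolding completable_local_def by simp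
  ultimately have C: "?C = {1}" using few card_le_Suc0_iff_eq[of ?C] by auto
  have "good_window k w s"
    unfolding good_window_def using s1 occ_v_nth[OF occ_s, of 0] k4
    by (intro disjI2 exI[of _ 1] exI[of _ 0]) simp
  moreover have "s + k \<le> length w" using gap t_end by simp
  ultimately obtain y where "y < s" "b_anchor k w y"
    using good_window_anchor[OF k2 uncompletable] by blast
  then show False using no_anchor_before_s[OF only_last C] by blast
qed

lemma only_last_completable:
  assumes only_last: "\<forall>r<k. completable k w (t + r) \<longleftrightarrow> r = k - 1"
  shows "2 \<le> card (completable_local k w s)"
proof -
  let ?R = "{0, k - 1}"
  have R: "?R \<subseteq> {..<k}" using k2 by auto
  have "completable k w (t + (k - 1))" using only_last[rule_format, of "k - 1"] k2 by simp
  moreover have "(0 + k - 1) mod k = k - 1" using k2 by simp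
  ultimately have "\<forall>r\<in>?R. completable k w (t + r) \<or> completable k w (t + (r + k - 1) mod k)"
    by simp
  note count = card_transfer[OF R this]
  show ?thesis
  proof (cases "0 \<in> offset ` ?R")
    case False
    then show ?thesis using count k2 by simp
  next
    case True
    have "\<not> completable k w (t + 0)" using only_last[rule_format, of 0] k2 by simp
    then have "\<not> completable k w t" by simp
    then have "offset (k - 1) = 0" using True offset_zero_impossible by auto
    then show ?thesis using only_last_offset_one[OF only_last] offset_last_zero by simp
  qed
qed

lemma completable_local_lower_bound:
  assumes i: "1 \<le> i" "i \<le> k - 2"
    and at_t: "\<forall>r<k. completable k w (t + r) \<longleftrightarrow> \<not> (r = 0 \<or> i \<le> r \<and> r \<le> k - 2)"
  shows "i + 1 \<le> card (completable_local k w s)"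
proof (cases "i = 1")
  case True
  then have "\<forall>r<k. completable k w (t + r) \<longleftrightarrow> r = k - 1" using at_t k4 by auto
  then show ?thesis using only_last_completable True by simp
next
  case False
  let ?R = "insert (k - 1) {..i}"
  have R: "?R \<subseteq> {..<k}" using i k4 by auto
  have "\<not> (k - 1 = 0 \<or> i \<le> k - 1 \<and> k - 1 \<le> k - 2)" using k4 by arith
  then have last_t: "completable k w (t + (k - 1))" using at_t[rule_format, of "k - 1"] k4 by simp
  have "completable k w (t + r) \<or> completable k w (t + (r + k - 1) mod k)" if "r \<in> ?R" for r
  proof -
    have "r = k - 1 \<or> r = 0 \<or> (0 < r \<and> r < i) \<or> r = i" using that by auto
    then consider "r = k - 1" | "r = 0" | "0 < r" "r < i" | "r = i" by blast
    then show ?thesis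
    proof cases
      case 1
      then show ?thesis using last_t by simp
    next
      case 2
      then have "(r + k - 1) mod k = k - 1" using k4 by simp
      then show ?thesis using last_t by simp
    next
      case 3
      then show ?thesis using at_t i by simp
    next
      case 4
      then have "r + k - 1 = (i - 1) + k" using i by simp
      moreover have "((i - 1) + k) mod k = i - 1"
        unfolding mod_add_self2 using i by simp
      ultimately have "(r + k - 1) mod k = i - 1" by metis
      moreover have "completable k w (t + (i - 1))"
        using at_t[rule_format, of "i - 1"] i False k4 by simp
      ultimately show ?thesis by simp
    qed
  qed
  note count = card_transfer[OF R ballI[OF this]]
  have "card ?R \<le> card (completable_local k w s) + 1"
    using count by (cases "0 \<in> offset ` ?R") simp_all
  moreover have "card ?R = i + 2" using i k4 by simp
  ultimately show ?thesis by simp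
qed

end

theorem lemma7:
  fixes k :: nat and w :: word and s t i :: nat
  assumes "k \<ge> 4"
    and "minimal_uncompletable k w"
    and "occ k w (v_word k) s"
    and "occ k w (v_word k) t"
    and "s < t"
    and "consecutive k w s t"
    and "1 \<le> i" and "i \<le> k - 2"
    and "forb_local k w t = {0} \<union> {i..k - 2}"
  shows "card (forb_local k w s) < card (forb_local k w t)"
proof -
  interpret consecutive_v_pair k w s t
    using assms(1-4,6) by unfold_locales
  have "\<forall>r<k. completable k w (t + r) \<longleftrightarrow> \<not> (r = 0 \<or> i \<le> r \<and> r \<le> k - 2)"
  proof (intro allI impI)
    fix r assume "r < k"
    then have "r \<in> forb_local k w t \<longleftrightarrow> \<not> completable k w (t + r)"
      unfolding forb_local_def using forbidden_iff[of "t + r" w k] t_end by simp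
    then show "completable k w (t + r) \<longleftrightarrow> \<not> (r = 0 \<or> i \<le> r \<and> r \<le> k - 2)"
      using assms(9) by auto
  qed
  then have "i + 1 \<le> card (completable_local k w s)"
    using completable_local_lower_bound assms(7,8) by blast
  moreover have "card (forb_local k w t) = k - i"
    using assms(7,8,9) by (simp add: card_insert_if)
  moreover have "card (forb_local k w s) = k - card (completable_local k w s)"
    using card_forb_local gap t_end by simp
  moreover have "completable_local k w s \<subseteq> {..<k}" unfolding completable_local_def by auto
  then have "card (completable_local k w s) \<le> k" using card_mono[OF finite_lessThan] by fastforce
  ultimately show ?thesis using assms(8) by linarith
qed

end
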